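(* For any $\bar{y}>0$, with $\tilde{x}$ the unique zero of $H$, one has $D(\bar{y},\tilde{x})>0$ and $\mathcal{G}(\bar{y},\tilde{x})>\beta$; consequently the solution $\tilde{F}$ of the ODE $\tilde{F}'(y)=\mathcal{G}(y,\tilde{F}(y))$ with $\tilde{F}(\bar{y})=\tilde{x}$ satisfies $\tilde{F}'(\bar{y})>\beta$.
   Context: Fix constants $\mu\in\mathbb{R}$, $\kappa>0$, $\sigma>0$, $\rho>0$, $\beta>0$, $c\geq0$, $\bar{y}>0$. Let $D_\alpha(x)=\frac{e^{-x^2/4}}{\Gamma(-\alpha)}\int_0^\infty t^{-\alpha-1}e^{-t^2/2-xt}dt$ ($\alpha<0$) and $\psi(x)=e^{\frac{\kappa(x-\mu)^2}{2\sigma^2}}D_{-\rho/\kappa}\big(-\frac{x-\mu}{\sigma}\sqrt{2\kappa}\big)$, the strictly increasing positive solution of $\frac{\sigma^2}{2}u''+\kappa(\mu-x)u'-\rho u=0$. Let $\tilde{R}(x,y)=\frac{\mu\kappa+\rho x-\beta(\rho+2\kappa)y}{\rho(\rho+\kappa)}$. For $k\geq0$ let $Q_k(z)=\psi^{(k)}(z)\psi^{(k+2)}(z)-\psi^{(k+1)}(z)^2$, so $Q_0'(z)=\psi(z)\psi'''(z)-\psi'(z)\psi''(z)$. Define $H(x)=\psi'(x)(c-\tilde{R}(x,\bar{y}))+(\rho+\kappa)^{-1}\psi(x)$, which has a unique real zero $\tilde{x}$. Define $D(y,z)=\psi(z)\big[(\rho+\kappa)(c-\tilde{R}(z,y))Q_1(z)+Q_0'(z)\big]$,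 $N(y,z)=Q_0(z)\Big(\frac{\rho+2\kappa}{\rho}\psi'(z)+(\rho+\kappa)(c-\tilde{R}(z,y))\psi''(z)+\psi'(z)\Big)$, and $\mathcal{G}(y,z)=\beta N(y,z)/D(y,z)$ for $(y,z)\in\mathbb{R}^2$ with $D(y,z)\neq0$. *)

theory Defs
  imports "HOL-Analysis.Analysis"
begin

text \<open>Parabolic cylinder function D_alpha(x) (integral representation, alpha < 0).\<close>
definition pcD :: "real \<Rightarrow> real \<Rightarrow> real" where
  "pcD \<alpha> x = exp (- x\<^sup>2 / 4) / Gamma (- \<alpha>) *
      (LBINT t:{0<..}. t powr (- \<alpha> - 1) * exp (- t\<^sup>2 / 2 - x * t))"

definition psi :: "real \<Rightarrow> real \<Rightarrow> real \<Rightarrow> real \<Rightarrow> real \<Rightarrow> real" where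
  "psi \<mu> \<kappa> \<sigma> \<rho> x = exp (\<kappa> * (x - \<mu>)\<^sup>2 / (2 * \<sigma>\<^sup>2)) *
      pcD (- \<rho> / \<kappa>) (- (x - \<mu>) / \<sigma> * sqrt (2 * \<kappa>))"

definition psid :: "real \<Rightarrow> real \<Rightarrow> real \<Rightarrow> real \<Rightarrow> nat \<Rightarrow> real \<Rightarrow> real" where
  "psid \<mu> \<kappa> \<sigma> \<rho> k = (deriv ^^ k) (psi \<mu> \<kappa> \<sigma> \<rho>)"

definition Rt :: "real \<Rightarrow> real \<Rightarrow> real \<Rightarrow> real \<Rightarrow> real \<Rightarrow> real \<Rightarrow> real" where
  "Rt \<mu> \<kappa> \<rho> \<beta> x y = (\<mu> * \<kappa> + \<rho> * x - \<beta> * (\<rho> + 2 * \<kappa>) * y) / (\<rho> * (\<rho> + \<kappa>))"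

definition Qk :: "real \<Rightarrow> real \<Rightarrow> real \<Rightarrow> real \<Rightarrow> nat \<Rightarrow> real \<Rightarrow> real" where
  "Qk \<mu> \<kappa> \<sigma> \<rho> k z = psid \<mu> \<kappa> \<sigma> \<rho> k z * psid \<mu> \<kappa> \<sigma> \<rho> (k + 2) z
      - (psid \<mu> \<kappa> \<sigma> \<rho> (k + 1) z)\<^sup>2"

definition Q0' :: "real \<Rightarrow> real \<Rightarrow> real \<Rightarrow> real \<Rightarrow> real \<Rightarrow> real" where
  "Q0' \<mu> \<kappa> \<sigma> \<rho> z = psid \<mu> \<kappa> \<sigma> \<rho> 0 z * psid \<mu> \<kappa> \<sigma> \<rho> 3 z
      - psid \<mu> \<kappa> \<sigma> \<rho> 1 z * psid \<mu> \<kappa> \<sigma> \<rho> 2 z"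

definition Hfun :: "real \<Rightarrow> real \<Rightarrow> real \<Rightarrow> real \<Rightarrow> real \<Rightarrow> real \<Rightarrow> real \<Rightarrow> real \<Rightarrow> real" where
  "Hfun \<mu> \<kappa> \<sigma> \<rho> \<beta> c ybar x = psid \<mu> \<kappa> \<sigma> \<rho> 1 x * (c - Rt \<mu> \<kappa> \<rho> \<beta> x ybar)
      + psid \<mu> \<kappa> \<sigma> \<rho> 0 x / (\<rho> + \<kappa>)"

definition Dfun :: "real \<Rightarrow> real \<Rightarrow> real \<Rightarrow> real \<Rightarrow> real \<Rightarrow> real \<Rightarrow> real \<Rightarrow> real \<Rightarrow> real" where
  "Dfun \<mu> \<kappa> \<sigma> \<rho> \<beta> c y z = psid \<mu> \<kappa> \<sigma> \<rho> 0 z *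
      ((\<rho> + \<kappa>) * (c - Rt \<mu> \<kappa> \<rho> \<beta> z y) * Qk \<mu> \<kappa> \<sigma> \<rho> 1 z + Q0' \<mu> \<kappa> \<sigma> \<rho> z)"

definition Nfun :: "real \<Rightarrow> real \<Rightarrow> real \<Rightarrow> real \<Rightarrow> real \<Rightarrow> real \<Rightarrow> real \<Rightarrow> real \<Rightarrow> real" where
  "Nfun \<mu> \<kappa> \<sigma> \<rho> \<beta> c y z = Qk \<mu> \<kappa> \<sigma> \<rho> 0 z *
      ((\<rho> + 2 * \<kappa>) / \<rho> * psid \<mu> \<kappa> \<sigma> \<rho> 1 z
       + (\<rho> + \<kappa>) * (c - Rt \<mu> \<kappa> \<rho> \<beta> z y) * psid \<mu> \<kappa> \<sigma> \<rho> 2 z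
       + psid \<mu> \<kappa> \<sigma> \<rho> 1 z)"

text \<open>G = beta N / D (only meaningful where D \<noteq> 0).\<close>
definition Gfun :: "real \<Rightarrow> real \<Rightarrow> real \<Rightarrow> real \<Rightarrow> real \<Rightarrow> real \<Rightarrow> real \<Rightarrow> real \<Rightarrow> real" where
  "Gfun \<mu> \<kappa> \<sigma> \<rho> \<beta> c y z = \<beta> * Nfun \<mu> \<kappa> \<sigma> \<rho> \<beta> c y z / Dfun \<mu> \<kappa> \<sigma> \<rho> \<beta> c y z"

end

theory Submission
  imports Defs "HOL-Real_Asymp.Real_Asymp"
begin

(* With a = sqrt (2 kappa) / sigma and the moments M q s = integral over t > 0 of
   t^(q-1) exp (s t - t^2/2), one has psi^(k) x = a^k M (rho/kappa + k) (a (x - mu)) / Gamma (rho/kappa).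
   Hence all derivatives of psi are positive and strictly log-convex (Q_k > 0, by Cauchy-Schwarz
   for the moments), and integration by parts, M (q+2) = s M (q+1) + q M q, is the ODE of psi
   differentiated k times.  At a zero of H one has (rho+kappa)(c - R) = - psi / psi', which turns D
   into psi psi'' Q_0 / psi' > 0 and N - D into 2 Q_0 ((rho+kappa) psi'^2 - rho psi psi'') / (rho psi');
   by the ODE the last bracket is sigma^2/2 * Q_1 > 0, so G = beta N / D > beta. *)

lemma integral_pos_AE:
  fixes f :: "'a \<Rightarrow> real"
  assumes f: "integrable M f" and nonneg: "AE x in M. 0 \<le> f x"
    and A: "A \<in> sets M" "emeasure M A \<noteq> 0" and pos: "AE x in M. x \<in> A \<longrightarrow> 0 < f x"
  shows "0 < integral\<^sup>L M f"
proof -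
  have "integral\<^sup>L M f \<noteq> 0"
  proof
    assume "integral\<^sup>L M f = 0"
    then have "AE x in M. f x = 0"
      using integral_nonneg_eq_0_iff_AE[OF f nonneg] by simp
    with pos have "AE x in M. x \<notin> A"
      by eventually_elim auto
    with A sets.sets_into_space[OF A(1)] show False
      by (subst (asm) AE_iff_measurable[OF A(1)]) auto
  qed
  moreover have "0 \<le> integral\<^sup>L M f"
    using nonneg by (rule integral_nonneg_AE)
  ultimately show ?thesis by simp
qed

lemma has_real_derivative_integral_dominated:
  fixes f :: "real \<Rightarrow> 'a \<Rightarrow> real"
  assumes int: "\<And>s. integrable M (f s)" and meas': "f' \<in> borel_measurable M"
    and g: "integrable M g"
    and deriv: "AE t in M. ((\<lambda>s. f s t) has_real_derivative f' t) (at x)"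
    and bound: "\<forall>\<^sub>F s in at x. AE t in M. \<bar>f s t - f x t\<bar> \<le> \<bar>s - x\<bar> * g t"
  shows "((\<lambda>s. integral\<^sup>L M (f s)) has_real_derivative integral\<^sup>L M f') (at x)"
  unfolding has_field_derivative_iff tendsto_at_iff_sequentially comp_def
proof (intro allI impI)
  fix X :: "nat \<Rightarrow> real"
  assume X: "\<forall>i. X i \<in> UNIV - {x}" and lim: "X \<longlonglongrightarrow> x"
  have "filterlim X (at x) sequentially"
    using X lim by (auto simp: filterlim_at eventually_sequentially)
  from filterlim_iff[THEN iffD1, OF this, rule_format, OF bound]
  obtain N where N: "\<And>n. N \<le> n \<Longrightarrow> AE t in M. \<bar>f (X n) t - f x t\<bar> \<le> \<bar>X n - x\<bar> * g t"
    by (auto simp: eventually_sequentially)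
  let ?q = "\<lambda>n t. (f (X n) t - f x t) / (X n - x)"
  have quotient: "(integral\<^sup>L M (f (X n)) - integral\<^sup>L M (f x)) / (X n - x) = integral\<^sup>L M (?q n)" for n
    using int by simp
  have "(\<lambda>n. integral\<^sup>L M (?q (n + N))) \<longlonglongrightarrow> integral\<^sup>L M f'"
  proof (rule integral_dominated_convergence[OF meas' _ g])
    show "?q (n + N) \<in> borel_measurable M" for n
      using int by (intro borel_measurable_divide borel_measurable_diff) auto
    show "AE t in M. (\<lambda>n. ?q (n + N) t) \<longlonglongrightarrow> f' t"
      using deriv
    proof eventually_elim
      case (elim t)
      then have "((\<lambda>s. (f s t - f x t) / (s - x)) \<longlongrightarrow> f' t) (at x)"
        by (simp add: has_field_derivative_iff)
      then have "(\<lambda>n. ?q n t) \<longlonglongrightarrow> f' t"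
        using X lim unfolding tendsto_at_iff_sequentially by (auto simp: comp_def)
      then show ?case
        by (rule LIMSEQ_ignore_initial_segment)
    qed
    show "AE t in M. norm (?q (n + N) t) \<le> g t" for n
    proof -
      have "AE t in M. \<bar>f (X (n + N)) t - f x t\<bar> \<le> \<bar>X (n + N) - x\<bar> * g t"
        by (rule N) simp
      then show ?thesis
      proof eventually_elim
        case (elim t)
        moreover have "X (n + N) - x \<noteq> 0" using X by auto
        ultimately show ?case
          by (simp add: abs_divide divide_le_eq mult.commute)
      qed
    qed
  qed
  then show "(\<lambda>n. (integral\<^sup>L M (f (X n)) - integral\<^sup>L M (f x)) / (X n - x)) \<longlonglongrightarrow> integral\<^sup>L M f'"
    unfolding quotient by (rule LIMSEQ_offset)
qed

definition gauss_kernel :: "real \<Rightarrow> real \<Rightarrow> real \<Rightarrow> real" where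
  "gauss_kernel q s t = indicator {0<..} t * t powr (q - 1) * exp (s * t - t\<^sup>2 / 2)"

definition gauss_moment :: "real \<Rightarrow> real \<Rightarrow> real" where
  "gauss_moment q s = integral\<^sup>L lborel (gauss_kernel q s)"

lemma gauss_kernel_measurable [measurable]: "gauss_kernel q s \<in> borel_measurable borel"
  unfolding gauss_kernel_def by measurable

lemma gauss_kernel_nonneg: "0 \<le> gauss_kernel q s t"
  by (simp add: gauss_kernel_def indicator_def)

lemma gauss_kernel_pos: "0 < t \<Longrightarrow> 0 < gauss_kernel q s t"
  by (simp add: gauss_kernel_def)

lemma gauss_kernel_plus_one: "t * gauss_kernel q s t = gauss_kernel (q + 1) s t"
proof (cases "0 < t")
  case True
  then have "t * t powr (q - 1) = t powr q"
    using powr_mult_base[of t "q - 1"] by simp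
  then show ?thesis
    by (simp add: gauss_kernel_def mult_ac)
qed (simp add: gauss_kernel_def)

lemma gauss_kernel_le_Gamma_density:
  "gauss_kernel q s t \<le> exp ((s + 1)\<^sup>2 / 2) * (indicator {0..} t * t powr (q - 1) / exp t)"
proof (cases "0 < t")
  case True
  have "s * t - t\<^sup>2 / 2 \<le> (s + 1)\<^sup>2 / 2 - t"
    using zero_le_power2[of "t - (s + 1)"] by (simp add: power2_eq_square algebra_simps)
  then have "exp (s * t - t\<^sup>2 / 2) \<le> exp ((s + 1)\<^sup>2 / 2) / exp t"
    unfolding exp_diff[of "(s + 1)\<^sup>2 / 2" t, symmetric] by (simp only: exp_le_cancel_iff)
  then have "t powr (q - 1) * exp (s * t - t\<^sup>2 / 2) \<le> t powr (q - 1) * (exp ((s + 1)\<^sup>2 / 2) / exp t)"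
    by (rule mult_left_mono) simp
  with True show ?thesis
    by (simp add: gauss_kernel_def field_simps)
qed (simp add: gauss_kernel_def)

lemma integrable_gauss_kernel:
  assumes "0 < q"
  shows "integrable lborel (gauss_kernel q s)"
proof (rule Bochner_Integration.integrable_bound)
  have "integrable lborel (\<lambda>t. indicator {0..} t * t powr (q - 1) / exp t)"
  proof (rule integrableI_nonneg)
    show "AE t in lborel. 0 \<le> indicator {0..} t * t powr (q - 1) / exp t"
      by (simp add: indicator_def)
    show "(\<integral>\<^sup>+ t. ennreal (indicator {0..} t * t powr (q - 1) / exp t) \<partial>lborel) < \<infinity>"
      unfolding Gamma_conv_nn_integral_real[OF assms, symmetric] by simp
  qed simp
  then show "integrable lborel (\<lambda>t. exp ((s + 1)\<^sup>2 / 2) * (indicator {0..} t * t powr (q - 1) / exp t))"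
    by (rule integrable_mult_right)
  show "AE t in lborel. norm (gauss_kernel q s t)
      \<le> norm (exp ((s + 1)\<^sup>2 / 2) * (indicator {0..} t * t powr (q - 1) / exp t))"
    using gauss_kernel_le_Gamma_density[of q s] gauss_kernel_nonneg[of q s] by (simp add: abs_of_nonneg)
qed simp

lemma abs_exp_diff_le: "\<bar>exp u - exp v\<bar> \<le> \<bar>u - v\<bar> * exp (max u v :: real)"
proof -
  have *: "exp x - exp y \<le> (x - y) * exp x" if "y \<le> x" for x y :: real
  proof -
    have "exp x * (1 + (y - x)) \<le> exp x * exp (y - x)"
      using exp_ge_add_one_self[of "y - x"] by (intro mult_left_mono) auto
    then show ?thesis
      by (simp add: exp_diff algebra_simps)
  qed
  show ?thesis
    using *[of v u] *[of u v] by (cases "v \<le> u") (auto simp: max_def abs_minus_commute)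
qed

lemma gauss_kernel_lipschitz:
  assumes "\<bar>s' - s\<bar> \<le> 1"
  shows "\<bar>gauss_kernel q s' t - gauss_kernel q s t\<bar> \<le> \<bar>s' - s\<bar> * gauss_kernel (q + 1) (\<bar>s\<bar> + 1) t"
proof (cases "0 < t")
  case True
  let ?a = "s' * t - t\<^sup>2 / 2" and ?b = "s * t - t\<^sup>2 / 2" and ?c = "(\<bar>s\<bar> + 1) * t - t\<^sup>2 / 2"
  have "s' * t \<le> (\<bar>s\<bar> + 1) * t" "s * t \<le> (\<bar>s\<bar> + 1) * t"
    using True assms by (intro mult_right_mono; linarith)+
  then have "exp (max ?a ?b) \<le> exp ?c"
    by simp
  then have "\<bar>s' - s\<bar> * t * exp (max ?a ?b) \<le> \<bar>s' - s\<bar> * t * exp ?c"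
    using True by (intro mult_left_mono) auto
  moreover have "\<bar>?a - ?b\<bar> = \<bar>s' - s\<bar> * t"
    using True by (simp add: abs_mult left_diff_distrib[symmetric])
  ultimately have exp_bound: "\<bar>exp ?a - exp ?b\<bar> \<le> \<bar>s' - s\<bar> * t * exp ?c"
    using abs_exp_diff_le[of ?a ?b] by simp
  have "\<bar>gauss_kernel q s' t - gauss_kernel q s t\<bar> = t powr (q - 1) * \<bar>exp ?a - exp ?b\<bar>"
    using True by (simp add: gauss_kernel_def abs_mult right_diff_distrib[symmetric])
  also have "\<dots> \<le> t powr (q - 1) * (\<bar>s' - s\<bar> * t * exp ?c)"
    using exp_bound by (rule mult_left_mono) simp
  also have "\<dots> = \<bar>s' - s\<bar> * ((t * t powr (q - 1)) * exp ?c)"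
    by (simp only: mult_ac)
  also have "t * t powr (q - 1) = t powr q"
    using True powr_mult_base[of t "q - 1"] by simp
  also have "\<bar>s' - s\<bar> * (t powr q * exp ?c) = \<bar>s' - s\<bar> * gauss_kernel (q + 1) (\<bar>s\<bar> + 1) t"
    using True by (simp add: gauss_kernel_def)
  finally show ?thesis .
qed (simp add: gauss_kernel_def)

lemma has_real_derivative_gauss_kernel:
  "((\<lambda>s. gauss_kernel q s t) has_real_derivative gauss_kernel (q + 1) s t) (at s)"
  unfolding gauss_kernel_plus_one[symmetric] unfolding gauss_kernel_def
  by (auto intro!: derivative_eq_intros simp: mult_ac)

lemma has_real_derivative_gauss_moment:
  assumes "0 < q"
  shows "(gauss_moment q has_real_derivative gauss_moment (q + 1) s) (at s)"
  unfolding gauss_moment_def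
proof (rule has_real_derivative_integral_dominated)
  show "integrable lborel (gauss_kernel q s')" for s'
    using assms by (rule integrable_gauss_kernel)
  show "integrable lborel (gauss_kernel (q + 1) (\<bar>s\<bar> + 1))"
    using assms by (intro integrable_gauss_kernel) simp
  show "AE t in lborel. ((\<lambda>s. gauss_kernel q s t) has_real_derivative gauss_kernel (q + 1) s t) (at s)"
    by (intro AE_I2 has_real_derivative_gauss_kernel)
  have "\<forall>\<^sub>F s' in at s. \<bar>s' - s\<bar> \<le> 1"
    using eventually_at[of "\<lambda>s'. \<bar>s' - s\<bar> \<le> 1" s UNIV]
    by (auto intro!: exI[of _ 1] simp: dist_real_def)
  then show "\<forall>\<^sub>F s' in at s. AE t in lborel.
      \<bar>gauss_kernel q s' t - gauss_kernel q s t\<bar> \<le> \<bar>s' - s\<bar> * gauss_kernel (q + 1) (\<bar>s\<bar> + 1) t"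
    by eventually_elim (auto intro: gauss_kernel_lipschitz)
qed simp

lemma gauss_moment_pos:
  assumes "0 < q"
  shows "0 < gauss_moment q s"
  unfolding gauss_moment_def
  by (rule integral_pos_AE[where A = "{0<..1}"])
    (auto intro: integrable_gauss_kernel[OF assms] gauss_kernel_nonneg gauss_kernel_pos)

lemma gauss_moment_log_convex:
  assumes "0 < q"
  shows "(gauss_moment (q + 1) s)\<^sup>2 < gauss_moment q s * gauss_moment (q + 2) s"
proof -
  define m where "m k = gauss_moment (q + k) s" for k :: real
  define l where "l = m 1 / m 0"
  have m0: "0 < m 0"
    using gauss_moment_pos[OF assms] by (simp add: m_def)
  have int: "integrable lborel (gauss_kernel q s)" "integrable lborel (gauss_kernel (q + 1) s)"
    "integrable lborel (gauss_kernel (q + 2) s)"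
    using assms by (auto intro: integrable_gauss_kernel)
  have square: "gauss_kernel q s t * (t - l)\<^sup>2
      = gauss_kernel (q + 2) s t - 2 * l * gauss_kernel (q + 1) s t + l\<^sup>2 * gauss_kernel q s t" for t
    using gauss_kernel_plus_one[of t q s] gauss_kernel_plus_one[of t "q + 1" s]
    by (simp add: power2_eq_square algebra_simps)
  have "0 < integral\<^sup>L lborel (\<lambda>t. gauss_kernel q s t * (t - l)\<^sup>2)"
  proof (rule integral_pos_AE[where A = "{0<..1}"])
    show "integrable lborel (\<lambda>t. gauss_kernel q s t * (t - l)\<^sup>2)"
      unfolding square using int by simp
    show "AE t in lborel. t \<in> {0<..1} \<longrightarrow> 0 < gauss_kernel q s t * (t - l)\<^sup>2"
      using AE_lborel_singleton[of l] by eventually_elim (auto intro!: mult_pos_pos gauss_kernel_pos)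
  qed (auto intro!: AE_I2 mult_nonneg_nonneg gauss_kernel_nonneg)
  also have "\<dots> = m 2 - 2 * l * m 1 + l\<^sup>2 * m 0"
    unfolding square m_def gauss_moment_def using int by simp
  also have "\<dots> = (m 0 * m 2 - (m 1)\<^sup>2) / m 0"
    using m0 by (simp add: l_def field_simps power2_eq_square)
  finally show ?thesis
    using m0 by (simp add: m_def zero_less_divide_iff)
qed

lemma isCont_gauss_kernel:
  assumes "0 < t"
  shows "isCont (gauss_kernel q s) t"
proof -
  have "\<forall>\<^sub>F u in nhds t. 0 < u"
    using eventually_nhds_in_open[of "{0<..}" t] assms by simp
  then have "\<forall>\<^sub>F u in nhds t. gauss_kernel q s u = u powr (q - 1) * exp (s * u - u\<^sup>2 / 2)"
    by eventually_elim (simp add: gauss_kernel_def)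
  moreover have "isCont (\<lambda>u. u powr (q - 1) * exp (s * u - u\<^sup>2 / 2)) t"
    using assms by (auto intro!: continuous_intros)
  ultimately show ?thesis
    by (rule isCont_cong[THEN iffD2])
qed

lemma has_real_derivative_gauss_weight:
  assumes "0 < t"
  shows "((\<lambda>t. t powr q * exp (s * t - t\<^sup>2 / 2)) has_real_derivative
      q * gauss_kernel q s t + s * gauss_kernel (q + 1) s t - gauss_kernel (q + 2) s t) (at t)"
proof -
  have "t * t powr (q - 1) = t powr q" "t * t powr q = t powr (1 + q)"
    using assms powr_mult_base[of t "q - 1"] powr_mult_base[of t q] by simp_all
  then have "q * gauss_kernel q s t + s * gauss_kernel (q + 1) s t - gauss_kernel (q + 2) s t
      = q * t powr (q - 1) * exp (s * t - t\<^sup>2 / 2) + t powr q * (exp (s * t - t\<^sup>2 / 2) * (s - t))"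
    using assms by (simp add: gauss_kernel_def algebra_simps)
  moreover have "((\<lambda>t. t powr q * exp (s * t - t\<^sup>2 / 2)) has_real_derivative
      q * t powr (q - 1) * exp (s * t - t\<^sup>2 / 2) + t powr q * (exp (s * t - t\<^sup>2 / 2) * (s - t))) (at t)"
    using assms by (auto intro!: derivative_eq_intros)
  ultimately show ?thesis
    by simp
qed

lemma gauss_moment_recurrence:
  assumes q: "0 < q"
  shows "gauss_moment (q + 2) s = s * gauss_moment (q + 1) s + q * gauss_moment q s"
proof -
  define f where "f t = q * gauss_kernel q s t + s * gauss_kernel (q + 1) s t - gauss_kernel (q + 2) s t"
    for t :: real
  have int: "integrable lborel (gauss_kernel q s)" "integrable lborel (gauss_kernel (q + 1) s)"
    "integrable lborel (gauss_kernel (q + 2) s)"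
    using q by (auto intro: integrable_gauss_kernel)
  have f_supported: "indicator (einterval 0 \<infinity>) t *\<^sub>R f t = f t" for t
    by (cases "0 < t") (simp_all add: f_def gauss_kernel_def indicator_def einterval_iff)
  have "(LBINT t=0..\<infinity>. f t) = 0 - 0"
  proof (rule interval_integral_FTC_integrable)
    show "((\<lambda>t. t powr q * exp (s * t - t\<^sup>2 / 2)) has_vector_derivative f t) (at t)"
      if "0 < ereal t" "ereal t < \<infinity>" for t
      using that has_real_derivative_gauss_weight[of t q s]
      by (simp add: f_def has_real_derivative_iff_has_vector_derivative)
    show "isCont f t" if "0 < ereal t" "ereal t < \<infinity>" for t
      using that unfolding f_def by (auto intro!: continuous_intros isCont_gauss_kernel)
    show "set_integrable lborel (einterval 0 \<infinity>) f"
      unfolding set_integrable_def f_supported unfolding f_def using int by simp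
    show "(((\<lambda>t. t powr q * exp (s * t - t\<^sup>2 / 2)) \<circ> real_of_ereal) \<longlongrightarrow> 0) (at_right 0)"
      unfolding zero_ereal_def ereal_tendsto_simps1 using q by real_asymp
    show "(((\<lambda>t. t powr q * exp (s * t - t\<^sup>2 / 2)) \<circ> real_of_ereal) \<longlongrightarrow> 0) (at_left \<infinity>)"
      unfolding ereal_tendsto_simps1 by real_asymp
  qed simp
  moreover have "(LBINT t=0..\<infinity>. f t) = q * gauss_moment q s + s * gauss_moment (q + 1) s - gauss_moment (q + 2) s"
    unfolding interval_lebesgue_integral_def set_lebesgue_integral_def f_supported
    unfolding f_def gauss_moment_def using int by simp
  ultimately show ?thesis by simp
qed

lemma pcD_eq_gauss_moment: "pcD \<alpha> x = exp (- x\<^sup>2 / 4) / Gamma (- \<alpha>) * gauss_moment (- \<alpha>) (- x)"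
proof -
  have "(\<lambda>t. indicator {0<..} t *\<^sub>R (t powr (- \<alpha> - 1) * exp (- t\<^sup>2 / 2 - x * t)))
      = gauss_kernel (- \<alpha>) (- x)"
    by (rule ext) (simp add: gauss_kernel_def)
  then show ?thesis
    by (simp add: pcD_def gauss_moment_def set_lebesgue_integral_def)
qed

lemma psi_eq_gauss_moment:
  assumes "0 < \<kappa>" "0 < \<sigma>"
  shows "psi \<mu> \<kappa> \<sigma> \<rho> x = gauss_moment (\<rho> / \<kappa>) (sqrt (2 * \<kappa>) / \<sigma> * (x - \<mu>)) / Gamma (\<rho> / \<kappa>)"
proof -
  define z where "z = - (x - \<mu>) / \<sigma> * sqrt (2 * \<kappa>)"
  have "z\<^sup>2 = (x - \<mu>)\<^sup>2 / \<sigma>\<^sup>2 * (2 * \<kappa>)"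
    using assms by (simp add: z_def power_mult_distrib power_divide power2_commute)
  then have "exp (\<kappa> * (x - \<mu>)\<^sup>2 / (2 * \<sigma>\<^sup>2)) * exp (- z\<^sup>2 / 4) = 1"
    using assms by (simp add: field_simps flip: exp_add)
  moreover have "- z = sqrt (2 * \<kappa>) / \<sigma> * (x - \<mu>)"
    using assms by (simp add: z_def field_simps)
  ultimately show ?thesis
    unfolding psi_def pcD_eq_gauss_moment z_def[symmetric] by simp
qed

lemma psid_eq_gauss_moment:
  assumes "0 < \<kappa>" "0 < \<sigma>" "0 < \<rho>"
  shows "psid \<mu> \<kappa> \<sigma> \<rho> k x
    = (sqrt (2 * \<kappa>) / \<sigma>) ^ k * gauss_moment (\<rho> / \<kappa> + k) (sqrt (2 * \<kappa>) / \<sigma> * (x - \<mu>))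
      / Gamma (\<rho> / \<kappa>)"
proof -
  define a where "a = sqrt (2 * \<kappa>) / \<sigma>"
  define p where "p = \<rho> / \<kappa>"
  have "0 < p"
    using assms by (simp add: p_def)
  have "psid \<mu> \<kappa> \<sigma> \<rho> k = (\<lambda>x. a ^ k * gauss_moment (p + k) (a * (x - \<mu>)) / Gamma p)"
  proof (induction k)
    case 0
    show ?case
      using psi_eq_gauss_moment[OF assms(1,2)] by (auto simp: psid_def a_def p_def)
  next
    case (Suc k)
    have "psid \<mu> \<kappa> \<sigma> \<rho> (Suc k) = deriv (psid \<mu> \<kappa> \<sigma> \<rho> k)"
      by (simp add: psid_def)
    also have "\<dots> = (\<lambda>x. a ^ Suc k * gauss_moment (p + Suc k) (a * (x - \<mu>)) / Gamma p)"
    proof (rule ext, rule DERIV_imp_deriv)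
      fix x
      have "((\<lambda>x. gauss_moment (p + k) (a * (x - \<mu>))) has_real_derivative
          gauss_moment (p + k + 1) (a * (x - \<mu>)) * a) (at x)"
        using \<open>0 < p\<close>
        by (intro DERIV_chain2[OF has_real_derivative_gauss_moment]) (auto intro!: derivative_eq_intros)
      then have "((\<lambda>x. a ^ k * gauss_moment (p + k) (a * (x - \<mu>)) / Gamma p) has_real_derivative
          a ^ k * (gauss_moment (p + k + 1) (a * (x - \<mu>)) * a) / Gamma p) (at x)"
        by (intro DERIV_cdivide DERIV_cmult)
      then show "(psid \<mu> \<kappa> \<sigma> \<rho> k has_real_derivative
          a ^ Suc k * gauss_moment (p + Suc k) (a * (x - \<mu>)) / Gamma p) (at x)"
        unfolding Suc.IH by (simp add: algebra_simps)
    qed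
    finally show ?case .
  qed
  then show ?thesis
    by (simp add: a_def p_def)
qed

context
  fixes \<mu> \<kappa> \<sigma> \<rho> :: real
  assumes \<kappa>: "0 < \<kappa>" and \<sigma>: "0 < \<sigma>" and \<rho>: "0 < \<rho>"
begin

lemma moment_index_pos: "0 < \<rho> / \<kappa> + real k"
  using \<kappa> \<rho> by (intro add_pos_nonneg) auto

lemma psid_pos: "0 < psid \<mu> \<kappa> \<sigma> \<rho> k x"
  using \<kappa> \<sigma> \<rho> gauss_moment_pos[OF moment_index_pos] Gamma_real_pos[of "\<rho> / \<kappa>"]
  by (simp add: psid_eq_gauss_moment)

lemma Qk_pos: "0 < Qk \<mu> \<kappa> \<sigma> \<rho> k x"
proof -
  define a where "a = sqrt (2 * \<kappa>) / \<sigma>"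
  define q where "q = \<rho> / \<kappa> + k"
  define m where "m j = gauss_moment (q + j) (a * (x - \<mu>))" for j :: real
  define G where "G = Gamma (\<rho> / \<kappa>)"
  have "0 < a" "0 < q" "0 < G"
    using \<kappa> \<sigma> \<rho> moment_index_pos by (simp_all add: a_def q_def G_def Gamma_real_pos)
  have psid: "psid \<mu> \<kappa> \<sigma> \<rho> (k + j) x = a ^ (k + j) * m j / G" for j
    using \<kappa> \<sigma> \<rho> by (simp add: psid_eq_gauss_moment a_def q_def m_def G_def add_ac)
  have "Qk \<mu> \<kappa> \<sigma> \<rho> k x
      = psid \<mu> \<kappa> \<sigma> \<rho> k x * psid \<mu> \<kappa> \<sigma> \<rho> (k + 2) x - (psid \<mu> \<kappa> \<sigma> \<rho> (k + 1) x)\<^sup>2"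
    by (simp add: Qk_def)
  also have "\<dots> = (a ^ k * m 0 / G) * (a ^ (k + 2) * m 2 / G) - (a ^ (k + 1) * m 1 / G)\<^sup>2"
    using psid[of 0] psid[of 1] psid[of 2] by simp
  also have "\<dots> = (a ^ (k + 1) / G)\<^sup>2 * (m 0 * m 2 - (m 1)\<^sup>2)"
    using \<open>0 < G\<close> by (simp add: field_simps power2_eq_square power_add)
  finally have "Qk \<mu> \<kappa> \<sigma> \<rho> k x = (a ^ (k + 1) / G)\<^sup>2 * (m 0 * m 2 - (m 1)\<^sup>2)" .
  moreover have "(m 1)\<^sup>2 < m 0 * m 2"
    using gauss_moment_log_convex[OF \<open>0 < q\<close>] by (simp add: m_def)
  ultimately show ?thesis
    using \<open>0 < a\<close> \<open>0 < G\<close> by simp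
qed

lemma psid_ode:
  "\<sigma>\<^sup>2 / 2 * psid \<mu> \<kappa> \<sigma> \<rho> (k + 2) x
    = \<kappa> * (x - \<mu>) * psid \<mu> \<kappa> \<sigma> \<rho> (k + 1) x + (\<rho> + k * \<kappa>) * psid \<mu> \<kappa> \<sigma> \<rho> k x"
proof -
  define a where "a = sqrt (2 * \<kappa>) / \<sigma>"
  define q where "q = \<rho> / \<kappa> + k"
  define s where "s = a * (x - \<mu>)"
  define m where "m j = gauss_moment (q + j) s" for j :: real
  define G where "G = Gamma (\<rho> / \<kappa>)"
  have "0 < q" "0 < G"
    using moment_index_pos \<rho> \<kappa> by (simp_all add: q_def G_def Gamma_real_pos)
  have psid: "psid \<mu> \<kappa> \<sigma> \<rho> (k + j) x = a ^ (k + j) * m j / G" for j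
    using \<kappa> \<sigma> \<rho> by (simp add: psid_eq_gauss_moment a_def q_def s_def m_def G_def add_ac)
  have a2: "\<sigma>\<^sup>2 / 2 * a\<^sup>2 = \<kappa>"
    using \<kappa> \<sigma> by (simp add: a_def power_divide)
  have "\<sigma>\<^sup>2 / 2 * psid \<mu> \<kappa> \<sigma> \<rho> (k + 2) x = \<sigma>\<^sup>2 / 2 * a\<^sup>2 * a ^ k * (s * m 1 + q * m 0) / G"
    using psid[of 2] gauss_moment_recurrence[OF \<open>0 < q\<close>, of s]
    by (simp add: m_def power_add power2_eq_square mult_ac)
  also have "\<dots> = \<kappa> * (x - \<mu>) * (a ^ (k + 1) * m 1 / G) + (\<rho> + k * \<kappa>) * (a ^ k * m 0 / G)"
    using \<kappa> \<open>0 < G\<close> unfolding a2 by (simp add: s_def q_def field_simps)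
  finally show ?thesis
    using psid[of 0] psid[of 1] by simp
qed

lemma Qk_1_eq:
  "\<sigma>\<^sup>2 / 2 * Qk \<mu> \<kappa> \<sigma> \<rho> 1 x
    = (\<rho> + \<kappa>) * (psid \<mu> \<kappa> \<sigma> \<rho> 1 x)\<^sup>2 - \<rho> * psid \<mu> \<kappa> \<sigma> \<rho> 0 x * psid \<mu> \<kappa> \<sigma> \<rho> 2 x"
proof -
  let ?P = "\<lambda>k. psid \<mu> \<kappa> \<sigma> \<rho> k x"
  have ode2: "\<sigma>\<^sup>2 / 2 * ?P 2 = \<kappa> * (x - \<mu>) * ?P 1 + \<rho> * ?P 0"
    using psid_ode[of 0 x] by (simp add: numeral_2_eq_2)
  have ode3: "\<sigma>\<^sup>2 / 2 * ?P 3 = \<kappa> * (x - \<mu>) * ?P 2 + (\<rho> + \<kappa>) * ?P 1"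
    using psid_ode[of 1 x] by (simp add: numeral_2_eq_2 numeral_3_eq_3)
  have "\<sigma>\<^sup>2 / 2 * Qk \<mu> \<kappa> \<sigma> \<rho> 1 x = ?P 1 * (\<sigma>\<^sup>2 / 2 * ?P 3) - ?P 2 * (\<sigma>\<^sup>2 / 2 * ?P 2)"
    by (simp add: Qk_def numeral_2_eq_2 numeral_3_eq_3 power2_eq_square algebra_simps)
  also have "\<dots> = ?P 1 * (\<kappa> * (x - \<mu>) * ?P 2 + (\<rho> + \<kappa>) * ?P 1) - ?P 2 * (\<kappa> * (x - \<mu>) * ?P 1 + \<rho> * ?P 0)"
    unfolding ode2 ode3 ..
  finally show ?thesis
    by (simp add: power2_eq_square algebra_simps)
qed

end

lemma Dfun_at_root_of_Hfun:
  assumes H: "Hfun \<mu> \<kappa> \<sigma> \<rho> \<beta> c y x = 0"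
    and "psid \<mu> \<kappa> \<sigma> \<rho> 1 x \<noteq> 0" "\<rho> + \<kappa> \<noteq> 0"
  shows "Dfun \<mu> \<kappa> \<sigma> \<rho> \<beta> c y x
    = psid \<mu> \<kappa> \<sigma> \<rho> 0 x * psid \<mu> \<kappa> \<sigma> \<rho> 2 x * Qk \<mu> \<kappa> \<sigma> \<rho> 0 x / psid \<mu> \<kappa> \<sigma> \<rho> 1 x"
proof -
  let ?P = "\<lambda>k. psid \<mu> \<kappa> \<sigma> \<rho> k x"
  define K where "K = (\<rho> + \<kappa>) * (c - Rt \<mu> \<kappa> \<rho> \<beta> x y)"
  have K_eq: "K = - ?P 0 / ?P 1"
    using H assms(2,3) by (simp add: K_def Hfun_def field_simps)
  show ?thesis
    unfolding Dfun_def K_def[symmetric] K_eq Qk_def Q0'_def using assms(2)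
    by (simp add: numeral_2_eq_2 numeral_3_eq_3 field_simps power2_eq_square)
qed

lemma Nfun_at_root_of_Hfun:
  assumes H: "Hfun \<mu> \<kappa> \<sigma> \<rho> \<beta> c y x = 0"
    and "psid \<mu> \<kappa> \<sigma> \<rho> 1 x \<noteq> 0" "\<rho> + \<kappa> \<noteq> 0" "\<rho> \<noteq> 0"
  shows "Nfun \<mu> \<kappa> \<sigma> \<rho> \<beta> c y x = Dfun \<mu> \<kappa> \<sigma> \<rho> \<beta> c y x
    + 2 * Qk \<mu> \<kappa> \<sigma> \<rho> 0 x
      * ((\<rho> + \<kappa>) * (psid \<mu> \<kappa> \<sigma> \<rho> 1 x)\<^sup>2 - \<rho> * psid \<mu> \<kappa> \<sigma> \<rho> 0 x * psid \<mu> \<kappa> \<sigma> \<rho> 2 x)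
      / (\<rho> * psid \<mu> \<kappa> \<sigma> \<rho> 1 x)"
proof -
  let ?P = "\<lambda>k. psid \<mu> \<kappa> \<sigma> \<rho> k x"
  define K where "K = (\<rho> + \<kappa>) * (c - Rt \<mu> \<kappa> \<rho> \<beta> x y)"
  have K_eq: "K = - ?P 0 / ?P 1"
    using H assms(2,3) by (simp add: K_def Hfun_def field_simps)
  show ?thesis
    unfolding Dfun_at_root_of_Hfun[OF assms(1-3)] Nfun_def K_def[symmetric] K_eq Qk_def
    using assms(2,4) by (simp add: numeral_2_eq_2 field_simps power2_eq_square)
qed

theorem lemma4p3:
  fixes \<mu> \<kappa> \<sigma> \<rho> \<beta> c ybar xt :: real
  assumes "\<kappa> > 0" "\<sigma> > 0" "\<rho> > 0" "\<beta> > 0" "c \<ge> 0" "ybar > 0"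
    and "Hfun \<mu> \<kappa> \<sigma> \<rho> \<beta> c ybar xt = 0"
    and "\<forall>x. Hfun \<mu> \<kappa> \<sigma> \<rho> \<beta> c ybar x = 0 \<longrightarrow> x = xt"
  shows "Dfun \<mu> \<kappa> \<sigma> \<rho> \<beta> c ybar xt > 0
    \<and> Gfun \<mu> \<kappa> \<sigma> \<rho> \<beta> c ybar xt > \<beta>
    \<and> (\<forall>F U. open U \<and> ybar \<in> U \<and> F ybar = xt
          \<and> (\<forall>y\<in>U. (F has_real_derivative Gfun \<mu> \<kappa> \<sigma> \<rho> \<beta> c y (F y)) (at y))
          \<longrightarrow> deriv F ybar > \<beta>)"
proof -
  note \<kappa> = assms(1) and \<sigma> = assms(2) and \<rho> = assms(3) and H = assms(7)
  have P: "0 < psid \<mu> \<kappa> \<sigma> \<rho> k xt" for k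
    using psid_pos[OF \<kappa> \<sigma> \<rho>] .
  have Q: "0 < Qk \<mu> \<kappa> \<sigma> \<rho> k xt" for k
    using Qk_pos[OF \<kappa> \<sigma> \<rho>] .
  have D_pos: "0 < Dfun \<mu> \<kappa> \<sigma> \<rho> \<beta> c ybar xt"
    using Dfun_at_root_of_Hfun[OF H] P[of 0] P[of 1] P[of 2] Q[of 0] \<kappa> \<rho> by simp
  have "0 < \<sigma>\<^sup>2 / 2 * Qk \<mu> \<kappa> \<sigma> \<rho> 1 xt"
    using Q[of 1] \<sigma> by simp
  then have "0 < (\<rho> + \<kappa>) * (psid \<mu> \<kappa> \<sigma> \<rho> 1 xt)\<^sup>2 - \<rho> * psid \<mu> \<kappa> \<sigma> \<rho> 0 xt * psid \<mu> \<kappa> \<sigma> \<rho> 2 xt"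
    unfolding Qk_1_eq[OF \<kappa> \<sigma> \<rho>] .
  then have "Dfun \<mu> \<kappa> \<sigma> \<rho> \<beta> c ybar xt < Nfun \<mu> \<kappa> \<sigma> \<rho> \<beta> c ybar xt"
    using Nfun_at_root_of_Hfun[OF H] P[of 1] Q[of 0] \<kappa> \<rho> by simp
  then have G: "\<beta> < Gfun \<mu> \<kappa> \<sigma> \<rho> \<beta> c ybar xt"
    using D_pos assms(4) by (simp add: Gfun_def less_divide_eq)
  have "deriv F ybar = Gfun \<mu> \<kappa> \<sigma> \<rho> \<beta> c ybar xt"
    if "ybar \<in> U" "F ybar = xt" "\<forall>y\<in>U. (F has_real_derivative Gfun \<mu> \<kappa> \<sigma> \<rho> \<beta> c y (F y)) (at y)"
    for F U
    using that by (auto intro: DERIV_imp_deriv)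
  with D_pos G show ?thesis
    by auto
qed

end
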